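(* Let $k\ge2$ and let $\mathcal C_2$ be the binary $(2k+1,k)$ code with generator matrix $G_c=(e_1\ \ e_1\ \ e_1+e_2\ \ e_2\ \ e_2+e_3\ \ e_3\ \cdots\ e_{k-1}+e_k\ \ e_k\ \ e_k)$. Then $\mathcal C_2$ has the Easy Repair Property.
   Context: $e_i$ denotes the $i$-th standard unit vector of $\mathbb F_2^k$. Let $g_1,\dots,g_{2k+1}$ be the columns of $G_c$; nodes are the coordinates of codewords $c=uG_c$. An erasure pattern is a set $S^e$ of erased nodes; the others are live. It is correctable if no two distinct codewords coincide on all live positions. A node $c_i$ is related to distinct nodes $c_{j_1},\dots,c_{j_\gamma}$ (all different from $c_i$) if $g_i=g_{j_1}+\dots+g_{j_\gamma}$. An erased node allows for easy repair if it is related to $\gamma\le2$ live nodes. An erasure pattern allows for easy repair if all erased nodes can be recovered by a sequence of easy repairs, where after each step the recovered node is regarded as live. A code has the Easy Repair Property if every correctable erasure pattern allows for easy repair. *)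

theory Defs
  imports Main "HOL-Library.Z2"
begin

text \<open>A binary linear code of length n and dimension k is given by its generator
  matrix, represented column-wise: g i is the i-th column (i \<in> {1..n}),
  and g i r is its r-th entry (r \<in> {1..k}).  Messages are u :: nat \<Rightarrow> bit
  (only the entries u 1, ..., u k matter); the codeword c = uG has i-th
  coordinate (node) c_i = sum over r of u r * g i r.\<close>

definition codeword :: "nat \<Rightarrow> (nat \<Rightarrow> nat \<Rightarrow> bit) \<Rightarrow> (nat \<Rightarrow> bit) \<Rightarrow> nat \<Rightarrow> bit" where
  "codeword k g u i = (\<Sum>r\<in>{1..k}. u r * g i r)"

definition correctable :: "nat \<Rightarrow> nat \<Rightarrow> (nat \<Rightarrow> nat \<Rightarrow> bit) \<Rightarrow> nat set \<Rightarrow> bool" where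
  "correctable n k g S \<longleftrightarrow>
     (\<forall>u v. (\<forall>i\<in>{1..n} - S. codeword k g u i = codeword k g v i)
            \<longrightarrow> (\<forall>i\<in>{1..n}. codeword k g u i = codeword k g v i))"

definition related :: "nat \<Rightarrow> (nat \<Rightarrow> nat \<Rightarrow> bit) \<Rightarrow> nat \<Rightarrow> nat set \<Rightarrow> bool" where
  "related k g i J \<longleftrightarrow> finite J \<and> J \<noteq> {} \<and> i \<notin> J \<and>
     (\<forall>r\<in>{1..k}. g i r = (\<Sum>j\<in>J. g j r))"

definition easy_node_repair :: "nat \<Rightarrow> (nat \<Rightarrow> nat \<Rightarrow> bit) \<Rightarrow> nat set \<Rightarrow> nat \<Rightarrow> bool" where
  "easy_node_repair k g L i \<longleftrightarrow> (\<exists>J. J \<subseteq> L \<and> card J \<le> 2 \<and> related k g i J)"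

inductive easy_repair :: "nat \<Rightarrow> nat \<Rightarrow> (nat \<Rightarrow> nat \<Rightarrow> bit) \<Rightarrow> nat set \<Rightarrow> bool"
  for n k g where
  empty: "easy_repair n k g {}"
| step: "\<lbrakk>i \<in> S; easy_node_repair k g ({1..n} - S) i; easy_repair n k g (S - {i})\<rbrakk>
         \<Longrightarrow> easy_repair n k g S"

definition easy_repair_property :: "nat \<Rightarrow> nat \<Rightarrow> (nat \<Rightarrow> nat \<Rightarrow> bit) \<Rightarrow> bool" where
  "easy_repair_property n k g \<longleftrightarrow>
     (\<forall>S. S \<subseteq> {1..n} \<and> correctable n k g S \<longrightarrow> easy_repair n k g S)"

definition unitv :: "nat \<Rightarrow> nat \<Rightarrow> bit" where
  "unitv m r = (if r = m then 1 else 0)"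

text \<open>Columns of G_c = (e_1, e_1, e_1+e_2, e_2, e_2+e_3, e_3, ..., e_(k-1)+e_k, e_k, e_k),
  length 2k+1: g_1 = e_1, g_(2m) = e_m (1 \<le> m \<le> k), g_(2m+1) = e_m + e_(m+1) (1 \<le> m < k),
  g_(2k+1) = e_k.\<close>

definition Gc :: "nat \<Rightarrow> nat \<Rightarrow> nat \<Rightarrow> bit" where
  "Gc k i = (if i = 1 then unitv 1
             else if i = 2 * k + 1 then unitv k
             else if even i then unitv (i div 2)
             else (\<lambda>r. unitv (i div 2) r + unitv (i div 2 + 1) r))"

end

theory Submission
  imports Defs
begin

text \<open>Think of the columns e_m as spokes and of the columns e_m + e_(m+1) as edges of the
  path 1, ..., k.  Let R be the set of indices m none of whose spoke columns is live.
  If R is empty, every erased node, whose column is a spoke or an edge, is the sum of at most two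
  live spoke columns.  Otherwise the message that is 1 exactly on R vanishes on every live
  spoke, and on every live edge not crossing the boundary of R; since the pattern is
  correctable, some live edge e_m + e_(m+1) crosses it, and the erased spoke on the R-side
  is the sum of that edge and the live spoke on the other side.  One easy repair keeps the
  pattern correctable, so induction on its size finishes the proof.\<close>

definition unitv_plus_next :: "nat \<Rightarrow> nat \<Rightarrow> bit" where
  "unitv_plus_next m r = unitv m r + unitv (Suc m) r"

lemma bit_add_self [simp]: "(x::bit) + x = 0"
  by (cases x) simp_all

lemma correctable_subset:
  "correctable n k g S \<Longrightarrow> S' \<subseteq> S \<Longrightarrow> correctable n k g S'"
  unfolding correctable_def by blast

lemma codeword_zero_message [simp]: "codeword k g (\<lambda>_. 0) i = 0"
  unfolding codeword_def by simp

lemma correctable_codeword_zero: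
  assumes "correctable n k g S" "\<forall>i\<in>{1..n} - S. codeword k g u i = 0" "i \<in> {1..n}"
  shows "codeword k g u i = 0"
  using assms unfolding correctable_def by (metis codeword_zero_message)

lemma codeword_unitv:
  assumes "g i = unitv m" "m \<in> {1..k}"
  shows "codeword k g u i = u m"
proof -
  have "codeword k g u i = (\<Sum>r\<in>{1..k}. if r = m then u m else 0)"
    unfolding codeword_def assms(1) by (rule sum.cong) (auto simp: unitv_def)
  then show ?thesis
    using assms(2) by simp
qed

lemma codeword_unitv_plus_next:
  assumes "g i = unitv_plus_next m" "m \<in> {1..k}" "Suc m \<in> {1..k}"
  shows "codeword k g u i = u m + u (Suc m)"
proof -
  have "codeword k g u i = codeword k (\<lambda>_. unitv m) u i + codeword k (\<lambda>_. unitv (Suc m)) u i"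
    unfolding codeword_def assms(1) unitv_plus_next_def by (simp only: distrib_left sum.distrib)
  then show ?thesis
    using assms(2,3) by (simp add: codeword_unitv)
qed

lemma easy_node_repair_singleton:
  assumes "p \<in> L" "i \<notin> L" "g i = g p"
  shows "easy_node_repair k g L i"
  unfolding easy_node_repair_def related_def
  using assms by (intro exI[of _ "{p}"]) auto

text \<open>The nonzero entry of g_i forces p \<noteq> q.\<close>

lemma easy_node_repair_pair:
  assumes "p \<in> L" "q \<in> L" "i \<notin> L" "g i r\<^sub>0 \<noteq> 0" "\<And>r. g i r = g p r + g q r"
  shows "easy_node_repair k g L i"
proof -
  have "p \<noteq> q"
    using assms(4,5) by force
  then show ?thesis
    unfolding easy_node_repair_def related_def
    using assms by (intro exI[of _ "{p, q}"]) auto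
qed

lemma easy_repair_propertyI:
  assumes "\<And>S. S \<subseteq> {1..n} \<Longrightarrow> correctable n k g S \<Longrightarrow> S \<noteq> {} \<Longrightarrow>
             \<exists>i\<in>S. easy_node_repair k g ({1..n} - S) i"
  shows "easy_repair_property n k g"
  unfolding easy_repair_property_def
proof (intro allI impI, elim conjE)
  fix S
  show "S \<subseteq> {1..n} \<Longrightarrow> correctable n k g S \<Longrightarrow> easy_repair n k g S"
  proof (induction "card S" arbitrary: S rule: less_induct)
    case less
    show ?case
    proof (cases "S = {}")
      case True
      then show ?thesis by (simp add: easy_repair.empty)
    next
      case False
      then obtain i where i: "i \<in> S" "easy_node_repair k g ({1..n} - S) i"
        using assms less.prems by blast
      have "card (S - {i}) < card S"
        using less.prems(1) i(1) by (meson card_Diff1_less finite_atLeastAtMost finite_subset)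
      then have "easy_repair n k g (S - {i})"
        using less by (intro less.hyps) (auto intro: correctable_subset)
      then show ?thesis
        using i easy_repair.step by blast
    qed
  qed
qed

lemma Gc_even: "1 \<le> m \<Longrightarrow> m \<le> k \<Longrightarrow> Gc k (2 * m) = unitv m"
  unfolding Gc_def by auto

lemma Gc_odd: "1 \<le> m \<Longrightarrow> m < k \<Longrightarrow> Gc k (2 * m + 1) = unitv_plus_next m"
  unfolding Gc_def unitv_plus_next_def by auto

lemma Gc_cases:
  assumes "i \<in> {1..2 * k + 1}" "1 \<le> k"
  obtains m where "m \<in> {1..k}" "Gc k i = unitv m"
    | m where "1 \<le> m" "m < k" "Gc k i = unitv_plus_next m"
proof -
  consider "i = 1" | "i = 2 * k + 1" | m where "i = 2 * m"
    | m where "i = 2 * m + 1" "i \<noteq> 1" "i \<noteq> 2 * k + 1"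
    by (metis evenE oddE)
  then show ?thesis
  proof cases
    case (3 m)
    then show ?thesis
      using assms that(1)[of m] by (simp add: Gc_even)
  next
    case (4 m)
    then show ?thesis
      using assms that(2)[of m] Gc_odd[of m k] by auto
  qed (use assms that in \<open>auto simp: Gc_def\<close>)
qed

lemma Gc_easy_node_repair_if_units_live:
  assumes "1 \<le> k" "i \<in> {1..2 * k + 1}" "i \<notin> L"
    and units_live: "\<And>m. m \<in> {1..k} \<Longrightarrow> \<exists>p\<in>L. Gc k p = unitv m"
  shows "easy_node_repair k (Gc k) L i"
  using assms(2,1)
proof (cases rule: Gc_cases)
  case (1 m)
  then obtain p where "p \<in> L" "Gc k p = unitv m"
    using units_live by blast
  then show ?thesis
    using 1 assms(3) by (intro easy_node_repair_singleton) auto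
next
  case (2 m)
  obtain p q where p: "p \<in> L" "Gc k p = unitv m" and q: "q \<in> L" "Gc k q = unitv (Suc m)"
    using 2 units_live[of m] units_live[of "Suc m"] by auto
  show ?thesis
  proof (rule easy_node_repair_pair[OF p(1) q(1) assms(3)])
    show "Gc k i m \<noteq> 0"
      by (simp add: 2 unitv_plus_next_def unitv_def)
    show "Gc k i r = Gc k p r + Gc k q r" for r
      by (simp add: 2 p q unitv_plus_next_def)
  qed
qed

lemma Gc_correctable_live_sum_crossing:
  assumes "1 \<le> k" "correctable (2 * k + 1) k (Gc k) S" "R \<subseteq> {1..k}" "R \<noteq> {}"
    and no_live_unit: "\<And>i m. i \<in> {1..2 * k + 1} - S \<Longrightarrow> m \<in> R \<Longrightarrow> Gc k i \<noteq> unitv m"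
  obtains m i where "1 \<le> m" "m < k" "i \<in> {1..2 * k + 1} - S" "Gc k i = unitv_plus_next m"
    "m \<in> R \<longleftrightarrow> Suc m \<notin> R"
proof (rule ccontr)
  assume "\<not> thesis"
  with that have no_crossing: "m \<in> R \<longleftrightarrow> Suc m \<in> R"
    if "1 \<le> m" "m < k" "i \<in> {1..2 * k + 1} - S" "Gc k i = unitv_plus_next m" for m i
    using that by blast
  define u :: "nat \<Rightarrow> bit" where "u r = (if r \<in> R then 1 else 0)" for r
  have "codeword k (Gc k) u i = 0" if "i \<in> {1..2 * k + 1} - S" for i
    using DiffD1[OF that] assms(1)
  proof (cases rule: Gc_cases)
    case (1 m)
    then have "m \<notin> R"
      using no_live_unit[OF that] by blast
    then show ?thesis
      using 1 by (simp add: codeword_unitv u_def)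
  next
    case (2 m)
    then have "m \<in> R \<longleftrightarrow> Suc m \<in> R"
      using no_crossing that by blast
    then show ?thesis
      using 2 by (simp add: codeword_unitv_plus_next u_def)
  qed
  moreover obtain m where m: "m \<in> R"
    using assms(4) by blast
  ultimately have "codeword k (Gc k) u (2 * m) = 0"
    using assms(2,3) by (intro correctable_codeword_zero) auto
  moreover have "codeword k (Gc k) u (2 * m) = 1"
    using m assms(3) by (subst codeword_unitv[where m = m]) (auto simp: Gc_even u_def)
  ultimately show False
    by simp
qed

lemma Gc_easy_node_repair_spoke:
  assumes "m \<in> {1..k}" "2 * m \<notin> L" "q \<in> L" "Gc k q = unitv_plus_next j"
    "p \<in> L" "Gc k p = unitv m'" "{m, m'} = {j, Suc j}"
  shows "easy_node_repair k (Gc k) L (2 * m)"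
proof (rule easy_node_repair_pair[OF assms(3,5,2)])
  have spoke: "Gc k (2 * m) = unitv m"
    using assms(1) by (intro Gc_even) auto
  show "Gc k (2 * m) m \<noteq> 0"
    unfolding spoke by (simp add: unitv_def)
  show "Gc k (2 * m) r = Gc k q r + Gc k p r" for r
    using assms(7) unfolding spoke assms(4,6) unitv_plus_next_def
    by (auto simp: doubleton_eq_iff unitv_def)
qed

lemma Gc_exists_easy_node_repair:
  assumes "1 \<le> k" "S \<subseteq> {1..2 * k + 1}" "correctable (2 * k + 1) k (Gc k) S" "S \<noteq> {}"
  shows "\<exists>i\<in>S. easy_node_repair k (Gc k) ({1..2 * k + 1} - S) i"
proof -
  define L where "L = {1..2 * k + 1} - S"
  define R where "R = {m \<in> {1..k}. \<forall>i\<in>L. Gc k i \<noteq> unitv m}"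
  have spoke_erased: "2 * m \<in> S" if "m \<in> R" for m
  proof (rule ccontr)
    assume "2 * m \<notin> S"
    with that have "2 * m \<in> L" "Gc k (2 * m) = unitv m"
      by (auto simp: R_def L_def Gc_even)
    with that show False
      by (auto simp: R_def)
  qed
  show ?thesis
  proof (cases "R = {}")
    case True
    then have "\<exists>p\<in>L. Gc k p = unitv m" if "m \<in> {1..k}" for m
      using that by (auto simp: R_def)
    moreover obtain i where "i \<in> S"
      using assms(4) by blast
    ultimately have "easy_node_repair k (Gc k) L i"
      using assms(1,2) by (intro Gc_easy_node_repair_if_units_live) (auto simp: L_def)
    with \<open>i \<in> S\<close> show ?thesis
      by (auto simp: L_def)
  next
    case False
    have "\<And>i m. i \<in> {1..2 * k + 1} - S \<Longrightarrow> m \<in> R \<Longrightarrow> Gc k i \<noteq> unitv m"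
      by (auto simp: R_def L_def)
    then obtain j q where j: "1 \<le> j" "j < k" and q: "q \<in> L" "Gc k q = unitv_plus_next j"
      and crossing: "j \<in> R \<longleftrightarrow> Suc j \<notin> R"
      using Gc_correctable_live_sum_crossing[OF assms(1,3) _ False] unfolding L_def R_def by blast
    obtain m m' where mm': "{m, m'} = {j, Suc j}" and m: "m \<in> R" and m': "m' \<in> {1..k} - R"
    proof (cases "j \<in> R")
      case True
      then show ?thesis
        using that[of j "Suc j"] crossing j by auto
    next
      case False
      then show ?thesis
        using that[of "Suc j" j] crossing j by auto
    qed
    from m' obtain p where p: "p \<in> L" "Gc k p = unitv m'"
      by (auto simp: R_def)
    have "easy_node_repair k (Gc k) L (2 * m)"
      using m spoke_erased[OF m]
      by (intro Gc_easy_node_repair_spoke[OF _ _ q p mm']) (auto simp: L_def R_def)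
    then show ?thesis
      using m spoke_erased L_def by blast
  qed
qed

theorem theorem4p5:
  fixes k :: nat
  assumes "k \<ge> 2"
  shows "easy_repair_property (2 * k + 1) k (Gc k)"
  using assms by (intro easy_repair_propertyI Gc_exists_easy_node_repair) auto

end
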